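(* For $n \ge 2$, \begin{align*} \mathbf{M}_n &= \begin{pmatrix} \frac{\Gamma \left(\frac{mn + m + n}{m + 1}\right)}{\Gamma(n) \, \Gamma \left(\frac{2m + 1}{m + 1}\right)} & 0 \\ \frac{2 \, \Gamma\left(\frac{mn + m + n}{m + 1}\right)}{\Gamma(n) \, \Gamma \left(\frac{2m + 1}{m + 1}\right)} - \frac{2(mn + n - 1) \, \Gamma \left(\frac{mn + m + n - 1}{m + 1}\right)}{m \, \Gamma(n) \, \Gamma \left(\frac{2m}{m + 1}\right)} & \frac{(mn + n - 1) \, \Gamma \left(\frac{mn + m + n - 1}{m + 1}\right)}{m \, \Gamma(n) \, \Gamma \left(\frac{2m}{m + 1}\right)} \end{pmatrix} \begin{pmatrix} W_n \\ B_n \end{pmatrix} \\ &\qquad + \begin{pmatrix} - \frac{\Gamma \left(\frac{mn + 2m + n + 1}{m + 1}\right)}{\Gamma(n) \, \Gamma \left(\frac{3m + 2}{m + 1}\right)} + 1 \\ \frac{(m + 1)(2mn + m + 2n - 1) \, \Gamma \left(\frac{mn + 2m + n}{m + 1}\right)}{m(3m + 1) \, \Gamma(n) \, \Gamma \left(\frac{2m}{m + 1}\right)} - \frac{2 \, \Gamma \left(\frac{mn + 2m + n + 1}{m + 1}\right)}{\Gamma(n) \, \Gamma \left(\frac{3m + 2}{m + 1}\right)} \end{pmatrix} \end{align*} is a martingale array (with respect to the filtration $\mathbb{F}_{n,0}$).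
   Context: A preferential dynamic attachment circuit of index $m\ge 2$ starts at time $0$ with a single node $0$. At time $n\ge1$ a new node $n$ is added and chooses $m$ parents one at a time, with replacement, from the existing nodes; at each of these $m$ steps an existing node $v$ is chosen with probability proportional to its current outdegree plus one (outdegrees are updated after each of the $m$ choices), and an edge is drawn from the chosen parent to node $n$. In the extended circuit, a node of outdegree $s$ carries $s+1$ external nodes; external nodes of nodes of outdegree $0$ are colored white and those of nodes of outdegree $1$ are colored blue. $W_n$ is the number of white external nodes (= number of nodes of outdegree $0$) and $B_n$ is the number of blue external nodes (= twice the number of nodes of outdegree $1$) after $n$ insertions. $\mathbb{F}_{n-1,0}$ is the $\sigma$-field generated by the growth of the circuit through the first $n-1$ node insertions. One has $\mathbb{E}[(W_n,B_n)^\top \mid \mathbb{F}_{n-1,0}] = \mathbf{A}_n (W_{n-1},B_{n-1})^\top + (1,0)^\top$ with $\mathbf{A}_n=\begin{pmatrix}\frac{(m+1)(n-1)}{mn+n-1} & 0\\ \frac{2m(m+1)(n-1)}{(mn+n-2)(mn+n-1)} & \frac{(m+1)(n-1)(mn-m+n-2)}{(mn+n-2)(mn+n-1)}\end{pmatrix}$. *)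

theory Defs
  imports "HOL-Probability.Probability"
begin

definition M11 :: "nat \<Rightarrow> nat \<Rightarrow> real" where
  "M11 m n = (let r = real m; x = real n in
     Gamma ((r*x + r + x)/(r+1)) / (Gamma x * Gamma ((2*r+1)/(r+1))))"

definition M22 :: "nat \<Rightarrow> nat \<Rightarrow> real" where
  "M22 m n = (let r = real m; x = real n in
     (r*x + x - 1) * Gamma ((r*x + r + x - 1)/(r+1)) / (r * Gamma x * Gamma (2*r/(r+1))))"

definition M21 :: "nat \<Rightarrow> nat \<Rightarrow> real" where
  "M21 m n = (let r = real m; x = real n in
     2 * Gamma ((r*x + r + x)/(r+1)) / (Gamma x * Gamma ((2*r+1)/(r+1)))
     - 2 * (r*x + x - 1) * Gamma ((r*x + r + x - 1)/(r+1)) / (r * Gamma x * Gamma (2*r/(r+1))))"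

definition c1 :: "nat \<Rightarrow> nat \<Rightarrow> real" where
  "c1 m n = (let r = real m; x = real n in
     - Gamma ((r*x + 2*r + x + 1)/(r+1)) / (Gamma x * Gamma ((3*r+2)/(r+1))) + 1)"

definition c2 :: "nat \<Rightarrow> nat \<Rightarrow> real" where
  "c2 m n = (let r = real m; x = real n in
     (r+1) * (2*r*x + r + 2*x - 1) * Gamma ((r*x + 2*r + x)/(r+1))
        / (r * (3*r+1) * Gamma x * Gamma (2*r/(r+1)))
     - 2 * Gamma ((r*x + 2*r + x + 1)/(r+1)) / (Gamma x * Gamma ((3*r+2)/(r+1))))"

definition A11 :: "nat \<Rightarrow> nat \<Rightarrow> real" where
  "A11 m n = (let r = real m; x = real n in (r+1)*(x-1) / (r*x + x - 1))"

definition A21 :: "nat \<Rightarrow> nat \<Rightarrow> real" where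
  "A21 m n = (let r = real m; x = real n in
     2*r*(r+1)*(x-1) / ((r*x + x - 2) * (r*x + x - 1)))"

definition A22 :: "nat \<Rightarrow> nat \<Rightarrow> real" where
  "A22 m n = (let r = real m; x = real n in
     (r+1)*(x-1)*(r*x - r + x - 2) / ((r*x + x - 2) * (r*x + x - 1)))"

definition filtration :: "'a measure \<Rightarrow> (nat \<Rightarrow> 'a measure) \<Rightarrow> bool" where
  "filtration M F \<longleftrightarrow> (\<forall>n. subalgebra M (F n)) \<and> (\<forall>n. sets (F n) \<subseteq> sets (F (Suc n)))"

definition martingale_from ::
  "'a measure \<Rightarrow> (nat \<Rightarrow> 'a measure) \<Rightarrow> nat \<Rightarrow> (nat \<Rightarrow> 'a \<Rightarrow> real) \<Rightarrow> bool" where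
  "martingale_from M F k X \<longleftrightarrow>
     (\<forall>n\<ge>k. X n \<in> borel_measurable (F n) \<and> integrable M (X n)) \<and>
     (\<forall>n>k. AE \<omega> in M. real_cond_exp M (F (n - 1)) (X n) \<omega> = X (n - 1) \<omega>)"

end

theory Submission
  imports Defs
begin

text \<open>Write \<open>t = m/(m+1)\<close>. Then every Gamma argument in \<open>M\<^sub>n\<close> and \<open>c\<^sub>n\<close> has the
  form \<open>n + a + b t\<close>, so passing from \<open>n\<close> to \<open>n - 1\<close> lowers it by one, and the functional
  equation \<open>\<Gamma>(x + 1) = x \<Gamma>(x)\<close> yields the recursions \<open>M\<^sub>n A\<^sub>n = M\<^sub>n\<^sub>-\<^sub>1\<close> and
  \<open>M\<^sub>n (1,0)\<^sup>T + c\<^sub>n = c\<^sub>n\<^sub>-\<^sub>1\<close>. By linearity of conditional expectation,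
  \<open>E[M\<^sub>n (W\<^sub>n,B\<^sub>n)\<^sup>T + c\<^sub>n | F\<^sub>n\<^sub>-\<^sub>1] = M\<^sub>n A\<^sub>n (W\<^sub>n\<^sub>-\<^sub>1,B\<^sub>n\<^sub>-\<^sub>1)\<^sup>T + M\<^sub>n (1,0)\<^sup>T + c\<^sub>n\<close>,
  which the recursions turn into \<open>M\<^sub>n\<^sub>-\<^sub>1 (W\<^sub>n\<^sub>-\<^sub>1,B\<^sub>n\<^sub>-\<^sub>1)\<^sup>T + c\<^sub>n\<^sub>-\<^sub>1\<close>.\<close>

lemma Gamma_real_plus1: "x > 0 \<Longrightarrow> Gamma ((x::real) + 1) = x * Gamma x"
  by (rule Gamma_plus1) (auto elim!: nonpos_Ints_cases)

text \<open>The entries of \<open>M\<^sub>n\<close>, \<open>c\<^sub>n\<close> and \<open>A\<^sub>n\<close> as functions of \<open>t = m/(m+1)\<close> and a real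
  time \<open>y\<close>; in these variables the Gamma arguments are shifted by exactly \<open>1\<close> with \<open>y\<close>.\<close>

definition M11t :: "real \<Rightarrow> real \<Rightarrow> real" where
  "M11t t y = Gamma (y + t) / (Gamma y * Gamma (1 + t))"
definition M22t :: "real \<Rightarrow> real \<Rightarrow> real" where
  "M22t t y = (y - 1 + t) * Gamma (y + 2*t - 1) / (t * Gamma y * Gamma (2*t))"
definition c1t :: "real \<Rightarrow> real \<Rightarrow> real" where
  "c1t t y = 1 - Gamma (y + 1 + t) / (Gamma y * Gamma (2 + t))"
definition c2t :: "real \<Rightarrow> real \<Rightarrow> real" where
  "c2t t y = (2*y + 2*t - 1) * Gamma (y + 2*t) / (t * (1 + 2*t) * Gamma y * Gamma (2*t))
     - 2 * Gamma (y + 1 + t) / (Gamma y * Gamma (2 + t))"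
definition A11t :: "real \<Rightarrow> real \<Rightarrow> real" where
  "A11t t y = (y - 1) / (y - 1 + t)"
definition A21t :: "real \<Rightarrow> real \<Rightarrow> real" where
  "A21t t y = 2*t*(y - 1) / ((y - 2 + 2*t) * (y - 1 + t))"
definition A22t :: "real \<Rightarrow> real \<Rightarrow> real" where
  "A22t t y = (y - 1) * (y - 2 + t) / ((y - 2 + 2*t) * (y - 1 + t))"

context
  fixes t y :: real
  assumes t: "t > 0" and y: "y \<ge> 1"
begin

private lemma Gamma_shifts:
  "Gamma (y + 1) = y * Gamma y"
  "Gamma (y + 1 + t) = (y + t) * Gamma (y + t)"
  "Gamma (y + 1 + 1 + t) = (y + 1 + t) * (y + t) * Gamma (y + t)"
  "Gamma (y + 1 + 2*t - 1) = (y + 2*t - 1) * Gamma (y + 2*t - 1)"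
  "Gamma (y + 2*t) = (y + 2*t - 1) * Gamma (y + 2*t - 1)"
  "Gamma (y + 1 + 2*t) = (y + 2*t) * (y + 2*t - 1) * Gamma (y + 2*t - 1)"
  "Gamma (2 + t) = (1 + t) * Gamma (1 + t)"
  using Gamma_real_plus1[of y] Gamma_real_plus1[of "y + t"] Gamma_real_plus1[of "y + 1 + t"]
    Gamma_real_plus1[of "y + 2*t - 1"] Gamma_real_plus1[of "y + 2*t"] Gamma_real_plus1[of "1 + t"] t y
  by (simp_all add: ac_simps)

private lemma Gamma_nonzero:
  "Gamma y \<noteq> 0" "Gamma (1 + t) \<noteq> 0" "Gamma (2*t) \<noteq> 0" "Gamma (y + t) \<noteq> 0"
  "Gamma (y + 2*t - 1) \<noteq> 0"
  using t y by (auto intro!: less_imp_neq[symmetric])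

private lemma denominators_pos:
  "0 < y" "0 < y + t" "0 < y + 1 + t" "0 < y - 1 + t" "0 < y + 2*t" "0 < y + 2*t - 1"
  "0 < y - 1 + 2*t" "0 < 1 + t" "0 < 1 + 2*t"
  using t y by auto

lemma M11t_step: "M11t t (y + 1) * A11t t (y + 1) = M11t t y"
  unfolding M11t_def A11t_def Gamma_shifts using Gamma_nonzero denominators_pos
  by (simp add: divide_simps; simp add: algebra_simps)

lemma c1t_step: "M11t t (y + 1) + c1t t (y + 1) = c1t t y"
  unfolding M11t_def c1t_def Gamma_shifts using Gamma_nonzero denominators_pos
  by (simp add: divide_simps; simp add: algebra_simps)

lemma M22t_step: "M22t t (y + 1) * A22t t (y + 1) = M22t t y"
  unfolding M22t_def A22t_def Gamma_shifts using Gamma_nonzero denominators_pos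
  by (simp add: divide_simps; simp add: algebra_simps)

lemma c2t_step: "2 * M11t t (y + 1) - 2 * M22t t (y + 1) + c2t t (y + 1) = c2t t y"
  unfolding M11t_def M22t_def c2t_def Gamma_shifts using Gamma_nonzero denominators_pos
  by (simp add: divide_simps; simp add: algebra_simps)

lemma A21t_eq: "A21t t (y + 1) = 2 * (A11t t (y + 1) - A22t t (y + 1))"
  unfolding A11t_def A21t_def A22t_def using denominators_pos
  by (simp add: divide_simps; simp add: algebra_simps)

lemma M21t_step:
  "(2 * M11t t (y + 1) - 2 * M22t t (y + 1)) * A11t t (y + 1) + M22t t (y + 1) * A21t t (y + 1)
     = 2 * M11t t y - 2 * M22t t y"
  unfolding A21t_eq M11t_step[symmetric] M22t_step[symmetric] by (simp add: algebra_simps)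

end

lemma times_divide_cong:
  fixes p q p' q' a b c :: real
  assumes "p / q = p' / q'"
  shows "p * a / (q * b * c) = p' * a / (q' * b * c)"
  by (metis assms mult.assoc times_divide_times_eq)

definition exponent :: "nat \<Rightarrow> real" where
  "exponent m = real m / (real m + 1)"

context
  fixes m :: nat
  assumes m: "m > 0"
begin

text \<open>The casts \<open>real m\<close>, \<open>real n\<close> are replaced by variables before calling
  \<open>field_simps\<close>/\<open>divide_simps\<close>, which otherwise do not terminate in reasonable time.\<close>

lemma exponent_pos: "exponent m > 0"
  using m by (simp add: exponent_def)

lemma M11_eq: "M11 m n = M11t (exponent m) (real n)"
proof -
  obtain r x where r: "real m = r" "r > 0" and x: "real n = x" using m by simp
  have "(r * x + r + x) / (r + 1) = x + r / (r + 1)"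
       "(2 * r + 1) / (r + 1) = 1 + r / (r + 1)"
    using r by (simp_all add: field_simps)
  then show ?thesis unfolding M11_def M11t_def exponent_def Let_def r(1) x by simp
qed

lemma M22_eq: "M22 m n = M22t (exponent m) (real n)"
proof -
  obtain r x where r: "real m = r" "r > 0" and x: "real n = x" using m by simp
  have args: "(r * x + r + x - 1) / (r + 1) = x + 2 * (r / (r + 1)) - 1"
       "2 * r / (r + 1) = 2 * (r / (r + 1))"
    using r by (simp_all add: field_simps)
  have "(r * x + x - 1) / r = (x - 1 + r / (r + 1)) / (r / (r + 1))"
    using r by (simp add: divide_simps) (simp add: algebra_simps)
  then show ?thesis unfolding M22_def M22t_def exponent_def Let_def r(1) x args
    by (rule times_divide_cong)
qed

lemma c1_eq: "c1 m n = c1t (exponent m) (real n)"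
proof -
  obtain r x where r: "real m = r" "r > 0" and x: "real n = x" using m by simp
  have "(r * x + 2 * r + x + 1) / (r + 1) = x + 1 + r / (r + 1)"
       "(3 * r + 2) / (r + 1) = 2 + r / (r + 1)"
    using r by (simp_all add: field_simps)
  then show ?thesis unfolding c1_def c1t_def exponent_def Let_def r(1) x by simp
qed

lemma c2_eq: "c2 m n = c2t (exponent m) (real n)"
proof -
  obtain r x where r: "real m = r" "r > 0" and x: "real n = x" using m by simp
  have args: "(r * x + 2 * r + x + 1) / (r + 1) = x + 1 + r / (r + 1)"
       "(3 * r + 2) / (r + 1) = 2 + r / (r + 1)"
       "(r * x + 2 * r + x) / (r + 1) = x + 2 * (r / (r + 1))"
       "2 * r / (r + 1) = 2 * (r / (r + 1))"
    using r by (simp_all add: field_simps)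
  have ratio: "(r + 1) * (2 * r * x + r + 2 * x - 1) / (r * (3 * r + 1))
          = (2 * x + 2 * (r / (r + 1)) - 1) / (r / (r + 1) * (1 + 2 * (r / (r + 1))))"
    using r by (simp add: divide_simps) (simp add: algebra_simps)
  show ?thesis unfolding c2_def c2t_def exponent_def Let_def r(1) x args
    by (subst times_divide_cong[OF ratio]) (rule refl)
qed

lemma A_eq:
  "A11 m n = A11t (exponent m) (real n)"
  "A21 m n = A21t (exponent m) (real n)"
  "A22 m n = A22t (exponent m) (real n)"
proof -
  obtain r x where r: "real m = r" "r > 0" and x: "real n = x" using m by simp
  show "A11 m n = A11t (exponent m) (real n)"
    unfolding A11_def A11t_def exponent_def Let_def r(1) x
    using r by (simp add: divide_simps) (simp add: algebra_simps)
  show "A21 m n = A21t (exponent m) (real n)"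
    unfolding A21_def A21t_def exponent_def Let_def r(1) x
    using r by (simp add: divide_simps) (simp add: algebra_simps)
  show "A22 m n = A22t (exponent m) (real n)"
    unfolding A22_def A22t_def exponent_def Let_def r(1) x
    using r by (simp add: divide_simps) (simp add: algebra_simps)
qed

lemma M21_eq: "M21 m n = 2 * M11t (exponent m) (real n) - 2 * M22t (exponent m) (real n)"
proof -
  have "M21 m n = 2 * M11 m n - 2 * M22 m n"
    unfolding M21_def M11_def M22_def Let_def by (simp add: mult.assoc)
  then show ?thesis by (simp add: M11_eq M22_eq)
qed

lemma coefficient_recursions:
  assumes n: "n \<ge> 1"
  shows "M11 m (Suc n) * A11 m (Suc n) = M11 m n"
    and "M11 m (Suc n) + c1 m (Suc n) = c1 m n"
    and "M21 m (Suc n) * A11 m (Suc n) + M22 m (Suc n) * A21 m (Suc n) = M21 m n"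
    and "M22 m (Suc n) * A22 m (Suc n) = M22 m n"
    and "M21 m (Suc n) + c2 m (Suc n) = c2 m n"
proof -
  have y: "real n \<ge> 1" and Suc_eq: "real (Suc n) = real n + 1"
    using n by simp_all
  show "M11 m (Suc n) * A11 m (Suc n) = M11 m n" "M11 m (Suc n) + c1 m (Suc n) = c1 m n"
    "M21 m (Suc n) * A11 m (Suc n) + M22 m (Suc n) * A21 m (Suc n) = M21 m n"
    "M22 m (Suc n) * A22 m (Suc n) = M22 m n" "M21 m (Suc n) + c2 m (Suc n) = c2 m n"
    unfolding M11_eq M21_eq M22_eq c1_eq c2_eq A_eq Suc_eq
    by (fact M11t_step[OF exponent_pos y] c1t_step[OF exponent_pos y]
        M21t_step[OF exponent_pos y] M22t_step[OF exponent_pos y] c2t_step[OF exponent_pos y])+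
qed

end

lemma (in prob_space) real_cond_exp_affine:
  assumes "subalgebra M G" and "integrable M X" and "integrable M Y"
  shows "AE \<omega> in M. real_cond_exp M G (\<lambda>\<omega>. a * X \<omega> + b * Y \<omega> + c) \<omega>
                     = a * real_cond_exp M G X \<omega> + b * real_cond_exp M G Y \<omega> + c"
proof -
  interpret G: finite_measure_subalgebra M G by unfold_locales fact
  have aX: "integrable M (\<lambda>\<omega>. a * X \<omega>)" and bY: "integrable M (\<lambda>\<omega>. b * Y \<omega>)"
    using assms(2,3) by simp_all
  have "AE \<omega> in M. real_cond_exp M G (\<lambda>\<omega>. a * X \<omega> + b * Y \<omega> + c) \<omega>
                 = real_cond_exp M G (\<lambda>\<omega>. a * X \<omega>) \<omega> + real_cond_exp M G (\<lambda>\<omega>. b * Y \<omega>) \<omega>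
                   + real_cond_exp M G (\<lambda>_. c) \<omega>"
    using G.real_cond_exp_add[OF Bochner_Integration.integrable_add[OF aX bY] integrable_const]
      G.real_cond_exp_add[OF aX bY]
    by eventually_elim simp
  moreover have "AE \<omega> in M. real_cond_exp M G (\<lambda>_. c) \<omega> = c"
    by (rule G.real_cond_exp_F_meas) simp_all
  ultimately show ?thesis
    using G.real_cond_exp_cmult[OF assms(2), of a] G.real_cond_exp_cmult[OF assms(3), of b]
    by eventually_elim simp
qed

theorem lemma1:
  fixes M :: "'a measure" and F :: "nat \<Rightarrow> 'a measure"
    and W B :: "nat \<Rightarrow> 'a \<Rightarrow> real" and m :: nat
  assumes "m \<ge> 2"
    and "prob_space M"
    and "filtration M F"
    and "\<And>n. W n \<in> borel_measurable (F n)" and "\<And>n. B n \<in> borel_measurable (F n)"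
    and "\<And>n. integrable M (W n)" and "\<And>n. integrable M (B n)"
    and "\<And>n. n \<ge> 1 \<Longrightarrow> AE \<omega> in M.
           real_cond_exp M (F (n - 1)) (W n) \<omega> = A11 m n * W (n - 1) \<omega> + 1"
    and "\<And>n. n \<ge> 1 \<Longrightarrow> AE \<omega> in M.
           real_cond_exp M (F (n - 1)) (B n) \<omega> = A21 m n * W (n - 1) \<omega> + A22 m n * B (n - 1) \<omega>"
  shows "martingale_from M F 2 (\<lambda>n \<omega>. M11 m n * W n \<omega> + c1 m n)
       \<and> martingale_from M F 2 (\<lambda>n \<omega>. M21 m n * W n \<omega> + M22 m n * B n \<omega> + c2 m n)"
proof -
  interpret prob_space M by fact
  have m: "m > 0" using assms(1) by simp
  have sub: "subalgebra M (F k)" for k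
    using assms(3) unfolding filtration_def by blast
  note [measurable] = assms(4,5)
  show ?thesis unfolding martingale_from_def
  proof (intro conjI allI impI)
    fix n :: nat assume "2 < n"
    then obtain k where n: "n = Suc k" and k: "k \<ge> 1"
      by (cases n) auto
    have "n \<ge> 1" using n by simp
    note rec = coefficient_recursions[OF m k]
    show "AE \<omega> in M. real_cond_exp M (F (n - 1)) (\<lambda>\<omega>. M11 m n * W n \<omega> + c1 m n) \<omega>
                    = M11 m (n - 1) * W (n - 1) \<omega> + c1 m (n - 1)"
      using real_cond_exp_affine[OF sub[of k] assms(6)[of n] assms(6)[of n],
          where a = "M11 m n" and b = 0 and c = "c1 m n"]
        assms(8)[OF \<open>n \<ge> 1\<close>]
      unfolding n by eventually_elim (simp flip: rec(1,2) add: algebra_simps)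
    show "AE \<omega> in M. real_cond_exp M (F (n - 1)) (\<lambda>\<omega>. M21 m n * W n \<omega> + M22 m n * B n \<omega> + c2 m n) \<omega>
                    = M21 m (n - 1) * W (n - 1) \<omega> + M22 m (n - 1) * B (n - 1) \<omega> + c2 m (n - 1)"
      using real_cond_exp_affine[OF sub[of k] assms(6)[of n] assms(7)[of n],
          where a = "M21 m n" and b = "M22 m n" and c = "c2 m n"]
        assms(8,9)[OF \<open>n \<ge> 1\<close>]
      unfolding n by eventually_elim (simp flip: rec(3,4,5) add: algebra_simps)
  qed (simp_all add: assms(6,7))
qed

end
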